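(* Let $\delta>0$ with $2\delta<\frac1\delta-1$ and $\delta<\frac14$, let $T_\delta$ be as in the context, let $\phi_\delta(x)=\int_1^x\int_1^y\frac{1}{T_\delta(z)}\,dz\,dy$ and $\phi(x)=x(\log x-1)+1$ (with $\phi(0)=1$). Then: (P1) $\phi_\delta''=\frac{1}{T_\delta}$ and $\phi_\delta(1)=\phi_\delta'(1)=0$; (P2) $\phi_\delta(x)\to\phi(x)$ as $\delta\to0$ for every $x\ge0$; (P3) $\phi_\delta(x)\ge0$ for all $x\in\mathbb{R}$; (P4) $\phi_\delta(x)\le\phi(x)+\frac{\delta}{2(1-\delta)}x^2+3$ for all $x\ge0$; (P5) $\phi_\delta(x)\to\infty$ as $\delta\to0$ for every $x<0$.
   Context: For each admissible $\delta$, $T_\delta:\mathbb{R}\to\mathbb{R}$ is a smooth nondecreasing function with $T_\delta(u)=\delta$ for $u\le\delta$, $T_\delta(u)=u$ for $u\in[2\delta,\frac1\delta-1]$, $T_\delta(u)=\frac1\delta$ for $u\ge\frac1\delta$, and a smooth monotone interpolation on $[\delta,2\delta]$ and on $[\frac1\delta-1,\frac1\delta]$. *)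

theory Defs
  imports "HOL-Analysis.Analysis"
begin

definition smooth_real :: "(real \<Rightarrow> real) \<Rightarrow> bool" where
  "smooth_real f \<longleftrightarrow> (\<forall>n. ((deriv ^^ n) f) differentiable_on UNIV)"

definition oint :: "real \<Rightarrow> real \<Rightarrow> (real \<Rightarrow> real) \<Rightarrow> real" where
  "oint a b f = (if a \<le> b then integral {a..b} f else - integral {b..a} f)"

definition admissible :: "real \<Rightarrow> bool" where
  "admissible d \<longleftrightarrow> d > 0 \<and> 2 * d < 1 / d - 1 \<and> d < 1/4"

definition is_T :: "real \<Rightarrow> (real \<Rightarrow> real) \<Rightarrow> bool" where
  "is_T d T \<longleftrightarrow> smooth_real T \<and> mono T
     \<and> (\<forall>u. u \<le> d \<longrightarrow> T u = d)
     \<and> (\<forall>u. 2 * d \<le> u \<and> u \<le> 1 / d - 1 \<longrightarrow> T u = u)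
     \<and> (\<forall>u. u \<ge> 1 / d \<longrightarrow> T u = 1 / d)"

definition psi_d :: "(real \<Rightarrow> real) \<Rightarrow> real \<Rightarrow> real" where
  "psi_d T y = oint 1 y (\<lambda>z. 1 / T z)"

definition phi_d :: "(real \<Rightarrow> real) \<Rightarrow> real \<Rightarrow> real" where
  "phi_d T x = oint 1 x (\<lambda>y. oint 1 y (\<lambda>z. 1 / T z))"

definition phi :: "real \<Rightarrow> real" where
  "phi x = (if x = 0 then 1 else x * (ln x - 1) + 1)"

end

theory Submission
  imports Defs "HOL-Real_Asymp.Real_Asymp"
begin

text \<open>
  On \<open>[2\<delta>, 1/\<delta> - 1]\<close> we have \<open>T\<^sub>\<delta> u = u\<close>; as \<open>1\<close> lies in this interval and there both \<open>\<phi>\<^sub>\<delta>\<close>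
  and \<open>\<phi>\<close> solve \<open>f'' = 1/u\<close>, \<open>f(1) = f'(1) = 0\<close>, they agree on it, which gives (P2) for \<open>x > 0\<close>.
  Everything else comes from comparing derivatives. Since \<open>\<delta> \<le> T\<^sub>\<delta>\<close>, on \<open>(-\<infinity>, 2\<delta>]\<close> the slope
  \<open>\<phi>\<^sub>\<delta>'\<close> lies between \<open>ln(2\<delta>) - 2\<close> and \<open>ln(2\<delta>)\<close>, so \<open>|\<phi>\<^sub>\<delta>(0) - 1| \<le> 2\<delta>\<close> and
  \<open>\<phi>\<^sub>\<delta>(x) \<ge> x ln(2\<delta>) \<rightarrow> \<infinity>\<close> for \<open>x < 0\<close>. Beyond \<open>M = 1/\<delta> - 1\<close> we have \<open>T\<^sub>\<delta> \<ge> M\<close>, so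
  \<open>\<phi>\<^sub>\<delta>\<close> exceeds \<open>\<phi>\<close> by at most \<open>(x - M)\<^sup>2/(2M) \<le> \<delta>x\<^sup>2/(2(1-\<delta>))\<close>. Finally \<open>\<phi>\<^sub>\<delta>\<close> is convex
  with \<open>\<phi>\<^sub>\<delta>(1) = \<phi>\<^sub>\<delta>'(1) = 0\<close>, hence nonnegative.
\<close>

lemma DERIV_le_imp_increment_le:
  fixes f g :: "real \<Rightarrow> real"
  assumes "a \<le> b"
    and f: "\<And>x. x \<in> {a..b} \<Longrightarrow> (f has_real_derivative f' x) (at x)"
    and g: "\<And>x. x \<in> {a..b} \<Longrightarrow> (g has_real_derivative g' x) (at x)"
    and le: "\<And>x. x \<in> {a..b} \<Longrightarrow> f' x \<le> g' x"
  shows "f b - f a \<le> g b - g a"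
proof -
  have "g a - f a \<le> g b - f b"
  proof (rule DERIV_nonneg_imp_nondecreasing[of a b "\<lambda>x. g x - f x", OF \<open>a \<le> b\<close>])
    fix x assume "a \<le> x" "x \<le> b"
    then show "\<exists>y. ((\<lambda>x. g x - f x) has_real_derivative y) (at x) \<and> 0 \<le> y"
      using f g le by (intro exI[of _ "g' x - f' x"]) (auto intro!: derivative_eq_intros)
  qed
  then show ?thesis by simp
qed

lemma eq_if_same_derivative_on_interval:
  fixes f g :: "real \<Rightarrow> real"
  assumes f: "\<And>y. y \<in> {a..b} \<Longrightarrow> (f has_real_derivative h y) (at y)"
    and g: "\<And>y. y \<in> {a..b} \<Longrightarrow> (g has_real_derivative h y) (at y)"
    and "t \<in> {a..b}" "x \<in> {a..b}" "f t = g t"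
  shows "f x = g x"
proof -
  have "\<exists>c. \<forall>y\<in>{a..b}. f y - g y = c"
  proof (rule has_field_derivative_zero_constant)
    fix y :: real assume "y \<in> {a..b}"
    then have "((\<lambda>y. f y - g y) has_real_derivative h y - h y) (at y)"
      using f g by (intro derivative_intros)
    then show "((\<lambda>y. f y - g y) has_real_derivative 0) (at y within {a..b})"
      by (simp add: has_field_derivative_at_within)
  qed simp
  then obtain c where "\<forall>y\<in>{a..b}. f y - g y = c" ..
  then have "f x - g x = f t - g t" using assms(3,4) by simp
  then show ?thesis using \<open>f t = g t\<close> by simp
qed

lemma oint_eq_integral_diff:
  assumes f: "continuous_on UNIV f" and "c \<le> a" "c \<le> x"
  shows "oint a x f = integral {c..x} f - integral {c..a} f"
proof (cases "a \<le> x")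
  case True
  have "integral {c..a} f + integral {a..x} f = integral {c..x} f"
    by (rule Henstock_Kurzweil_Integration.integral_combine)
       (use True assms in \<open>auto intro: integrable_continuous_interval continuous_on_subset[OF f]\<close>)
  then show ?thesis using True by (simp add: oint_def)
next
  case False
  have "integral {c..x} f + integral {x..a} f = integral {c..a} f"
    by (rule Henstock_Kurzweil_Integration.integral_combine)
       (use False assms in \<open>auto intro: integrable_continuous_interval continuous_on_subset[OF f]\<close>)
  then show ?thesis using False by (simp add: oint_def)
qed

lemma oint_has_real_derivative:
  assumes f: "continuous_on UNIV f"
  shows "((\<lambda>x. oint a x f) has_real_derivative f x) (at x)"
proof -
  define c where "c = min a x - 1"
  have "((\<lambda>y. integral {c..y} f) has_real_derivative f x) (at x within {c..x + 1})"
    by (rule integral_has_real_derivative) (auto simp: c_def intro: continuous_on_subset[OF f])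
  then have "((\<lambda>y. integral {c..y} f) has_real_derivative f x) (at x within {c<..<x + 1})"
    by (rule has_field_derivative_subset) auto
  then have "((\<lambda>y. integral {c..y} f) has_real_derivative f x) (at x)"
    using at_within_open[of x "{c<..<x + 1}"] by (simp add: c_def)
  then have "((\<lambda>y. integral {c..y} f - integral {c..a} f) has_real_derivative f x) (at x)"
    by (auto intro!: derivative_eq_intros)
  then show ?thesis
    by (rule has_field_derivative_transform_within_open[of _ _ _ "{c<..}"])
       (use oint_eq_integral_diff[OF f, of c] in \<open>auto simp: c_def\<close>)
qed

lemma phi_has_real_derivative:
  assumes "x > 0"
  shows "(phi has_real_derivative ln x) (at x)"
proof -
  have "((\<lambda>x. x * (ln x - 1) + 1) has_real_derivative ln x) (at x)"
    using assms by (auto intro!: derivative_eq_intros)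
  then show ?thesis
    by (rule has_field_derivative_transform_within_open[of _ _ _ "{0<..}"])
       (use assms in \<open>auto simp: phi_def\<close>)
qed

lemma phi_nonneg:
  assumes "x \<ge> 0"
  shows "phi x \<ge> 0"
proof (cases "x = 0")
  case False
  then have "x > 0" using assms by simp
  have "ln (1/x) \<le> 1/x - 1" using \<open>x > 0\<close> by (intro ln_le_minus_one) simp
  then have "x * (- ln x) \<le> x * (1/x - 1)"
    using \<open>x > 0\<close> by (intro mult_left_mono) (auto simp: ln_div)
  then show ?thesis using \<open>x > 0\<close> by (simp add: phi_def algebra_simps)
qed (simp add: phi_def)

lemma admissible_iff: "admissible d \<longleftrightarrow> 0 < d \<and> d < 1/4"
proof
  assume "0 < d \<and> d < 1/4"
  then have "d * (2 * d) < 1 - d" by (auto intro: order.strict_trans1[OF mult_right_mono, of _ "1/4"])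
  then show "admissible d" using \<open>0 < d \<and> d < 1/4\<close> by (auto simp: admissible_def field_simps)
qed (simp add: admissible_def)

locale truncation =
  fixes d :: real and T :: "real \<Rightarrow> real"
  assumes admissible: "admissible d" and is_T: "is_T d T"
begin

lemma d_pos: "0 < d" and d_lt_quarter: "d < 1/4"
  using admissible by (auto simp: admissible_iff)

lemma two_d_lt_one: "2 * d < 1" and one_lt_cutoff: "1 < 1/d - 1"
  using admissible d_pos d_lt_quarter by (auto simp: admissible_def field_simps)

lemma T_eq_id: "2 * d \<le> u \<Longrightarrow> u \<le> 1/d - 1 \<Longrightarrow> T u = u"
  and T_mono: "u \<le> v \<Longrightarrow> T u \<le> T v"
  using is_T by (auto simp: is_T_def mono_def)

lemma d_le_T: "d \<le> T u"
  using T_mono[of d u] is_T by (cases "u \<le> d") (auto simp: is_T_def)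

lemma T_pos: "0 < T u"
  using d_le_T[of u] d_pos by simp

lemma continuous_on_inverse_T: "continuous_on UNIV (\<lambda>z. 1 / T z)"
proof -
  have "((deriv ^^ 0) T) differentiable_on UNIV"
    using is_T by (simp only: is_T_def smooth_real_def)
  then have "continuous_on UNIV T" by (simp add: differentiable_imp_continuous_on)
  then show ?thesis by (intro continuous_intros) (auto simp: T_pos[THEN less_imp_neq, THEN not_sym])
qed

lemma psi_d_has_real_derivative: "(psi_d T has_real_derivative 1 / T x) (at x)"
  unfolding psi_d_def[abs_def] by (rule oint_has_real_derivative[OF continuous_on_inverse_T])

lemma phi_d_has_real_derivative: "(phi_d T has_real_derivative psi_d T x) (at x)"
proof -
  have "continuous_on UNIV (psi_d T)"
    using psi_d_has_real_derivative by (meson DERIV_isCont continuous_at_imp_continuous_on)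
  moreover have "phi_d T = (\<lambda>x. oint 1 x (psi_d T))"
    by (simp add: fun_eq_iff phi_d_def psi_d_def[abs_def])
  ultimately show ?thesis using oint_has_real_derivative by simp
qed

lemma psi_d_one: "psi_d T 1 = 0" and phi_d_one: "phi_d T 1 = 0"
  by (simp_all add: psi_d_def phi_d_def oint_def)

lemma psi_d_mono: "x \<le> y \<Longrightarrow> psi_d T x \<le> psi_d T y"
  using DERIV_le_imp_increment_le[of x y "\<lambda>_. 0" "\<lambda>_. 0" "psi_d T" "\<lambda>x. 1 / T x"]
    psi_d_has_real_derivative T_pos by (simp add: less_imp_le)

lemma psi_d_eq_ln:
  assumes "2 * d \<le> y" "y \<le> 1/d - 1"
  shows "psi_d T y = ln y"
proof -
  have D: "(psi_d T has_real_derivative 1 / z) (at z)" "(ln has_real_derivative 1 / z) (at z)"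
    if "z \<in> {2 * d..1/d - 1}" for z
    using that psi_d_has_real_derivative[of z] d_pos by (auto simp: T_eq_id intro: DERIV_ln_divide)
  show ?thesis
    by (rule eq_if_same_derivative_on_interval[OF D, where t=1])
       (use assms two_d_lt_one one_lt_cutoff psi_d_one in auto)
qed

lemma phi_d_eq_phi:
  assumes "2 * d \<le> x" "x \<le> 1/d - 1"
  shows "phi_d T x = phi x"
proof -
  have D: "(phi_d T has_real_derivative ln z) (at z)" "(phi has_real_derivative ln z) (at z)"
    if "z \<in> {2 * d..1/d - 1}" for z
    using that phi_d_has_real_derivative[of z] d_pos
    by (auto simp: psi_d_eq_ln intro: phi_has_real_derivative)
  show ?thesis
    by (rule eq_if_same_derivative_on_interval[OF D, where t=1])
       (use assms two_d_lt_one one_lt_cutoff phi_d_one in \<open>auto simp: phi_def\<close>)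
qed

lemma inverse_T_le: "1 / T u \<le> 1 / d"
  using d_le_T d_pos by (simp add: frac_le)

lemma psi_d_le_near_0: "y \<le> 2 * d \<Longrightarrow> psi_d T y \<le> ln (2 * d)"
  using psi_d_mono[of y "2 * d"] psi_d_eq_ln[of "2 * d"] two_d_lt_one one_lt_cutoff by simp

lemma psi_d_ge_near_0:
  assumes "0 \<le> y" "y \<le> 2 * d"
  shows "ln (2 * d) - 2 \<le> psi_d T y"
proof -
  have "psi_d T (2 * d) - psi_d T y \<le> 2 * d / d - y / d"
    using assms(2) psi_d_has_real_derivative DERIV_cdivide[OF DERIV_ident] inverse_T_le
    by (rule DERIV_le_imp_increment_le)
  moreover have "psi_d T (2 * d) = ln (2 * d)"
    using two_d_lt_one one_lt_cutoff by (intro psi_d_eq_ln) auto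
  moreover have "0 \<le> y / d" using assms(1) d_pos by simp
  ultimately show ?thesis using d_pos by simp
qed

lemma phi_d_two_d: "phi_d T (2 * d) = 2 * d * (ln (2 * d) - 1) + 1"
  using phi_d_eq_phi[of "2 * d"] two_d_lt_one one_lt_cutoff d_pos by (simp add: phi_def)

lemma phi_d_ge_near_0:
  assumes "x \<le> 2 * d"
  shows "1 - 2 * d + x * ln (2 * d) \<le> phi_d T x"
proof -
  have "phi_d T (2 * d) - phi_d T x \<le> 2 * d * ln (2 * d) - x * ln (2 * d)"
    using assms phi_d_has_real_derivative psi_d_le_near_0
    by (intro DERIV_le_imp_increment_le[where f'="psi_d T" and g'="\<lambda>_. ln (2 * d)"])
       (auto intro!: derivative_eq_intros)
  then show ?thesis unfolding phi_d_two_d by (simp add: algebra_simps)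
qed

lemma phi_d_le_near_0:
  assumes "0 \<le> x" "x \<le> 2 * d"
  shows "phi_d T x \<le> 1 + 2 * d"
proof -
  have "2 * d * (ln (2 * d) - 2) - x * (ln (2 * d) - 2) \<le> phi_d T (2 * d) - phi_d T x"
    using assms phi_d_has_real_derivative psi_d_ge_near_0
    by (intro DERIV_le_imp_increment_le[where f'="\<lambda>_. ln (2 * d) - 2" and g'="psi_d T"])
       (auto intro!: derivative_eq_intros)
  then have "phi_d T x \<le> 1 + 2 * d + x * ln (2 * d) - 2 * x"
    unfolding phi_d_two_d by (simp add: algebra_simps)
  moreover have "x * ln (2 * d) \<le> 0"
    using assms(1) two_d_lt_one d_pos by (simp add: mult_nonneg_nonpos)
  ultimately show ?thesis using assms(1) by linarith
qed

lemma phi_d_nonneg: "0 \<le> phi_d T x"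
proof (cases "x \<le> 1")
  case True
  have "phi_d T 1 - phi_d T x \<le> 0 - 0"
    using True phi_d_has_real_derivative psi_d_mono[of _ 1] psi_d_one
    by (intro DERIV_le_imp_increment_le[where g="\<lambda>_. 0" and g'="\<lambda>_. 0"]) auto
  then show ?thesis using phi_d_one by simp
next
  case False
  have "0 - 0 \<le> phi_d T x - phi_d T 1"
    using False phi_d_has_real_derivative psi_d_mono[of 1] psi_d_one
    by (intro DERIV_le_imp_increment_le[where f="\<lambda>_. 0" and f'="\<lambda>_. 0"]) auto
  then show ?thesis using phi_d_one by simp
qed

lemma phi_d_le_beyond:
  assumes "1/d - 1 \<le> x"
  shows "phi_d T x \<le> phi x + d / (2 * (1 - d)) * x ^ 2"
proof -
  define M where "M = 1/d - 1"
  have "0 < M" using one_lt_cutoff by (simp add: M_def)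
  have "2 * d \<le> M" using two_d_lt_one one_lt_cutoff by (simp add: M_def)
  have psi_d_le: "psi_d T y \<le> ln y + (y - M) / M" if "M \<le> y" for y
  proof -
    have "1 / T z \<le> 1 / M" if "M \<le> z" for z
      using T_mono[OF that] T_eq_id[OF \<open>2 * d \<le> M\<close>] \<open>0 < M\<close> by (simp add: M_def frac_le)
    then have "psi_d T y - psi_d T M \<le> (ln y + (y - M) / M) - (ln M + (M - M) / M)"
      using that \<open>0 < M\<close> psi_d_has_real_derivative
      by (intro DERIV_le_imp_increment_le[where f'="\<lambda>z. 1 / T z" and g'="\<lambda>z. 1 / z + 1 / M"])
         (auto intro!: derivative_eq_intros simp: add_increasing)
    then show ?thesis
      using psi_d_eq_ln[OF \<open>2 * d \<le> M\<close>] by (simp add: M_def)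
  qed
  have "((\<lambda>z. phi z + (z - M)\<^sup>2 / (2 * M)) has_real_derivative ln z + (z - M) / M) (at z)"
    if "M \<le> z" for z
    using that \<open>0 < M\<close>
    by (auto intro!: derivative_eq_intros phi_has_real_derivative simp: power2_eq_square field_simps)
  then have "phi_d T x - phi_d T M \<le> (phi x + (x - M)\<^sup>2 / (2 * M)) - (phi M + (M - M)\<^sup>2 / (2 * M))"
    using assms phi_d_has_real_derivative psi_d_le
    by (intro DERIV_le_imp_increment_le[where f'="psi_d T"]) (auto simp: M_def)
  then have "phi_d T x \<le> phi x + d / (2 * (1 - d)) * (x - M)\<^sup>2"
    using phi_d_eq_phi[OF \<open>2 * d \<le> M\<close>] d_pos d_lt_quarter by (simp add: M_def field_simps)
  also have "\<dots> \<le> phi x + d / (2 * (1 - d)) * x\<^sup>2"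
    using assms \<open>0 < M\<close> d_pos d_lt_quarter
    by (intro add_left_mono mult_left_mono power_mono) (auto simp: M_def)
  finally show ?thesis .
qed

lemma phi_d_le:
  assumes "0 \<le> x"
  shows "phi_d T x \<le> phi x + d / (2 * (1 - d)) * x ^ 2 + 3"
proof -
  have quadratic_nonneg: "0 \<le> d / (2 * (1 - d)) * x ^ 2" using d_pos d_lt_quarter by simp
  consider "x \<le> 2 * d" | "2 * d \<le> x" "x \<le> 1/d - 1" | "1/d - 1 \<le> x" by linarith
  then show ?thesis
  proof cases
    case 1
    then show ?thesis
      using phi_d_le_near_0[OF assms] phi_nonneg[OF assms] d_lt_quarter quadratic_nonneg by fastforce
  next
    case 2
    then show ?thesis using phi_d_eq_phi quadratic_nonneg by simp
  next
    case 3
    then show ?thesis using phi_d_le_beyond by fastforce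
  qed
qed

end

lemma eventually_admissible: "\<forall>\<^sub>F d in at_right 0. admissible d"
  unfolding admissible_iff eventually_at_right_field by (intro exI[of _ "1/4"]) auto

lemma phi_d_tendsto_phi:
  assumes T: "\<And>d. admissible d \<Longrightarrow> is_T d (T d)" and "0 \<le> x"
  shows "((\<lambda>d. phi_d (T d) x) \<longlongrightarrow> phi x) (at_right 0)"
proof (cases "x = 0")
  case True
  have "\<forall>\<^sub>F d in at_right 0. 1 - 2 * d \<le> phi_d (T d) x \<and> phi_d (T d) x \<le> 1 + 2 * d"
    using eventually_admissible
  proof eventually_elim
    case (elim d)
    interpret truncation d "T d" using elim T by (simp add: truncation_def)
    show ?case using phi_d_ge_near_0[of 0] phi_d_le_near_0[of 0] d_pos True by simp
  qed
  moreover have "((\<lambda>d. 1 - 2 * d) \<longlongrightarrow> phi x) (at_right 0)"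
    "((\<lambda>d. 1 + 2 * d) \<longlongrightarrow> phi x) (at_right 0)"
    using True by (simp_all add: phi_def) real_asymp+
  ultimately show ?thesis by (auto simp: eventually_conj_iff intro: tendsto_sandwich)
next
  case False
  then have "0 < x" using \<open>0 \<le> x\<close> by simp
  then have "\<forall>\<^sub>F d in at_right 0. 2 * d \<le> x" "\<forall>\<^sub>F d in at_right 0. x \<le> 1/d - 1"
    by real_asymp+
  then have "\<forall>\<^sub>F d in at_right 0. phi_d (T d) x = phi x"
    using eventually_admissible
  proof eventually_elim
    case (elim d)
    interpret truncation d "T d" using elim T by (simp add: truncation_def)
    show ?case using phi_d_eq_phi elim by simp
  qed
  then show ?thesis by (rule tendsto_eventually)
qed

lemma phi_d_tendsto_at_top_neg:
  assumes T: "\<And>d. admissible d \<Longrightarrow> is_T d (T d)" and "x < 0"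
  shows "filterlim (\<lambda>d. phi_d (T d) x) at_top (at_right 0)"
proof (rule filterlim_at_top_mono)
  show "filterlim (\<lambda>d. x * ln (2 * d)) at_top (at_right 0)"
    using \<open>x < 0\<close> by real_asymp
  show "\<forall>\<^sub>F d in at_right 0. x * ln (2 * d) \<le> phi_d (T d) x"
    using eventually_admissible
  proof eventually_elim
    case (elim d)
    interpret truncation d "T d" using elim T by (simp add: truncation_def)
    show ?case using phi_d_ge_near_0[of x] two_d_lt_one d_pos \<open>x < 0\<close> by simp
  qed
qed

theorem lemma2p1:
  fixes T :: "real \<Rightarrow> real \<Rightarrow> real"
  assumes hT: "\<And>d. admissible d \<Longrightarrow> is_T d (T d)"
  shows "(\<forall>d. admissible d \<longrightarrow>
            (\<forall>x. (phi_d (T d) has_real_derivative psi_d (T d) x) (at x)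
                 \<and> (psi_d (T d) has_real_derivative 1 / T d x) (at x))
            \<and> phi_d (T d) 1 = 0 \<and> psi_d (T d) 1 = 0)
       \<and> (\<forall>x\<ge>0. ((\<lambda>d. phi_d (T d) x) \<longlongrightarrow> phi x) (at_right 0))
       \<and> (\<forall>d. admissible d \<longrightarrow> (\<forall>x. phi_d (T d) x \<ge> 0))
       \<and> (\<forall>d. admissible d \<longrightarrow> (\<forall>x\<ge>0.
              phi_d (T d) x \<le> phi x + d / (2 * (1 - d)) * x ^ 2 + 3))
       \<and> (\<forall>x<0. filterlim (\<lambda>d. phi_d (T d) x) at_top (at_right 0))"
proof -
  have trunc: "admissible d \<Longrightarrow> truncation d (T d)" for d
    using hT by (simp add: truncation_def)
  show ?thesis
    using truncation.phi_d_has_real_derivative[OF trunc] truncation.psi_d_has_real_derivative[OF trunc]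
      truncation.phi_d_one[OF trunc] truncation.psi_d_one[OF trunc]
      truncation.phi_d_nonneg[OF trunc] truncation.phi_d_le[OF trunc]
      phi_d_tendsto_phi[OF hT] phi_d_tendsto_at_top_neg[OF hT]
    by blast
qed

end
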